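(* Let $n$ be an odd positive integer, $n_1=\lceil n/2\rceil$, $n_0=\lfloor n/2\rfloor$, and let $k\in K=\mathrm{GL}_2(\mathfrak{o})$. Then (1) $l(k\,a(\varpi^{n_1}))\ge n_1$ if and only if $k\in N(\mathfrak{o})K^0(\mathfrak{p})$; (2) $l(k\,a(\varpi^{n_1}))\le n_0$ if and only if $k\in wK^0(\mathfrak{p})$.
   Context: $F$ is a non-archimedean local field of characteristic $0$ with ring of integers $\mathfrak{o}$, maximal ideal $\mathfrak{p}$, uniformizer $\varpi$, residue field of size $q$, valuation $v$; $U_j=\{x\in\mathfrak{o}^\times: v(x-1)\ge j\}$ ($U_0=\mathfrak o^\times$). $G=\mathrm{GL}_2(F)$, $K=\mathrm{GL}_2(\mathfrak{o})$, $w=\begin{pmatrix}0&1\\-1&0\end{pmatrix}$, $a(y)=\mathrm{diag}(y,1)$, $n(x)=\begin{pmatrix}1&x\\0&1\end{pmatrix}$, $Z$ the center, $N=\{n(x):x\in F\}$, $N(\mathfrak o)=\{n(x):x\in\mathfrak o\}$, $K_1(\mathfrak{p}^n)=K\cap\begin{pmatrix}1+\mathfrak{p}^n&\mathfrak{o}\\\mathfrak{p}^n&\mathfrak{o}\end{pmatrix}$, $K^0(\mathfrak{p})=K\cap\begin{pmatrix}\mathfrak{o}&\mathfrak{p}\\\mathfrak{o}&\mathfrak{o}\end{pmatrix}$. There is a disjoint decomposition $G=\bigsqcup_{t\in\mathbb{Z}}\bigsqcup_{0\le l\le n}\bigsqcup_{v\in\mathfrak{o}^\times/U_{\min(l,n-l)}}ZN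 a(\varpi^t)wn(\varpi^{-l}v)K_1(\mathfrak{p}^n)$; for $g\in G$, $t(g)$ and $l(g)$ denote the unique integers with $0\le l(g)\le n$ and $g\in ZNa(\varpi^{t(g)})wn(\varpi^{-l(g)}v)K_1(\mathfrak{p}^n)$ for some $v\in\mathfrak{o}^\times$. *)

theory Defs
  imports Main
begin

text \<open>The field F is a type of class field_char_0 (characteristic 0), equipped with a
normalized discrete valuation val (only meaningful on nonzero elements; v(0)=+infinity is
encoded by explicit guards x = 0).\<close>

definition discrete_valuation :: "('a::field \<Rightarrow> int) \<Rightarrow> bool" where
  "discrete_valuation val \<longleftrightarrow>
     (\<forall>x y. x \<noteq> 0 \<longrightarrow> y \<noteq> 0 \<longrightarrow> val (x * y) = val x + val y) \<and>
     (\<forall>x y. x \<noteq> 0 \<longrightarrow> y \<noteq> 0 \<longrightarrow> x + y \<noteq> 0 \<longrightarrow> min (val x) (val y) \<le> val (x + y)) \<and>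
     (\<exists>x. x \<noteq> 0 \<and> val x = 1)"

definition pideal :: "('a::field \<Rightarrow> int) \<Rightarrow> int \<Rightarrow> 'a set" where
  "pideal val j = {x. x = 0 \<or> j \<le> val x}"

definition ointegers :: "('a::field \<Rightarrow> int) \<Rightarrow> 'a set" where
  "ointegers val = pideal val 0"

definition ounits :: "('a::field \<Rightarrow> int) \<Rightarrow> 'a set" where
  "ounits val = {x. x \<noteq> 0 \<and> val x = 0}"

definition val_cauchy :: "('a::field \<Rightarrow> int) \<Rightarrow> (nat \<Rightarrow> 'a) \<Rightarrow> bool" where
  "val_cauchy val s \<longleftrightarrow> (\<forall>M. \<exists>N. \<forall>i\<ge>N. \<forall>j\<ge>N. s i - s j \<in> pideal val M)"

definition val_converges :: "('a::field \<Rightarrow> int) \<Rightarrow> (nat \<Rightarrow> 'a) \<Rightarrow> 'a \<Rightarrow> bool" where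
  "val_converges val s L \<longleftrightarrow> (\<forall>M. \<exists>N. \<forall>i\<ge>N. s i - L \<in> pideal val M)"

definition nonarch_local_field :: "('a::field_char_0 \<Rightarrow> int) \<Rightarrow> bool" where
  "nonarch_local_field val \<longleftrightarrow>
     discrete_valuation val \<and>
     (\<forall>s. val_cauchy val s \<longrightarrow> (\<exists>L. val_converges val s L)) \<and>
     (\<exists>R. finite R \<and> R \<subseteq> ointegers val \<and>
          (\<forall>x\<in>ointegers val. \<exists>r\<in>R. x - r \<in> pideal val 1))"

datatype 'a m2 = M2 'a 'a 'a 'a


fun mm :: "'a::ring m2 \<Rightarrow> 'a m2 \<Rightarrow> 'a m2" (infixl "\<cdot>\<^sub>m" 70) where
  "mm (M2 a b c d) (M2 e f g h) = M2 (a*e + b*g) (a*f + b*h) (c*e + d*g) (c*f + d*h)"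

fun mdet :: "'a::comm_ring m2 \<Rightarrow> 'a" where
  "mdet (M2 a b c d) = a*d - b*c"

definition GL2 :: "'a::field m2 set" where
  "GL2 = {g. mdet g \<noteq> 0}"

definition wmat :: "'a::comm_ring_1 m2" where
  "wmat = M2 0 1 (-1) 0"

definition amat :: "'a::comm_ring_1 \<Rightarrow> 'a m2" where
  "amat y = M2 y 0 0 1"

definition nmat :: "'a::comm_ring_1 \<Rightarrow> 'a m2" where
  "nmat x = M2 1 x 0 1"

definition zmat :: "'a::comm_ring_1 \<Rightarrow> 'a m2" where
  "zmat z = M2 z 0 0 z"

definition Kmax :: "('a::field \<Rightarrow> int) \<Rightarrow> 'a m2 set" where
  "Kmax val = {M2 a b c d | a b c d.
      a \<in> ointegers val \<and> b \<in> ointegers val \<and> c \<in> ointegers val \<and> d \<in> ointegers val \<and>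
      a*d - b*c \<in> ounits val}"

definition K1 :: "('a::field \<Rightarrow> int) \<Rightarrow> nat \<Rightarrow> 'a m2 set" where
  "K1 val n = {M2 a b c d | a b c d. M2 a b c d \<in> Kmax val \<and>
      a - 1 \<in> pideal val (int n) \<and> c \<in> pideal val (int n)}"

definition K0p :: "('a::field \<Rightarrow> int) \<Rightarrow> 'a m2 set" where
  "K0p val = {M2 a b c d | a b c d. M2 a b c d \<in> Kmax val \<and> b \<in> pideal val 1}"

definition NoK0p :: "('a::field \<Rightarrow> int) \<Rightarrow> 'a m2 set" where
  "NoK0p val = {nmat x \<cdot>\<^sub>m k | x k. x \<in> ointegers val \<and> k \<in> K0p val}"

definition wK0p :: "('a::field \<Rightarrow> int) \<Rightarrow> 'a m2 set" where
  "wK0p val = {wmat \<cdot>\<^sub>m k | k. k \<in> K0p val}"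

definition in_cell :: "('a::field \<Rightarrow> int) \<Rightarrow> 'a \<Rightarrow> nat \<Rightarrow> int \<Rightarrow> nat \<Rightarrow> 'a m2 \<Rightarrow> bool" where
  "in_cell val uf n t l g \<longleftrightarrow>
     (\<exists>z x v k. z \<noteq> 0 \<and> v \<in> ounits val \<and> k \<in> K1 val n \<and>
        g = zmat z \<cdot>\<^sub>m nmat x \<cdot>\<^sub>m amat (uf powi t) \<cdot>\<^sub>m wmat
              \<cdot>\<^sub>m nmat (uf powi (- int l) * v) \<cdot>\<^sub>m k)"

definition lval :: "('a::field \<Rightarrow> int) \<Rightarrow> 'a \<Rightarrow> nat \<Rightarrow> 'a m2 \<Rightarrow> nat" where
  "lval val uf n g = (THE l. l \<le> n \<and> (\<exists>t. in_cell val uf n t l g))"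

definition tval :: "('a::field \<Rightarrow> int) \<Rightarrow> 'a \<Rightarrow> nat \<Rightarrow> 'a m2 \<Rightarrow> int" where
  "tval val uf n g = (THE t. \<exists>l. l \<le> n \<and> in_cell val uf n t l g)"

end

theory Submission imports Defs begin

text \<open>For g = M2 A B C D in GL2, the invariant l(g) depends only on the bottom row (C, D):
it is v(C) - v(D) clipped to the interval [0, n]. Indeed, the bottom row of
z n(x) a(y) w n(u) k with u = \<varpi>^(-l) v is -z times (a + u c, b + u d), where (a, b, c, d)
are the entries of k \<in> K_1(p^n); this row has v(C) - v(D) = l when 0 < l < n, and the
one-sided inequalities at the ends. Conversely, suitable z, x, y, u and k realise every such
row and determinant. For g = k a(\<varpi>^n1) with k \<in> K the bottom row is (c \<varpi>^n1, d), so
l(g) \<ge> n1 exactly when d is a unit, i.e. when k \<in> N(o) K^0(p), and l(g) \<le> n0 exactly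
when d \<in> p, i.e. when k \<in> w K^0(p).\<close>

lemma mdet_mm: "mdet (g \<cdot>\<^sub>m h) = mdet g * mdet (h::'a::comm_ring m2)"
  by (cases g; cases h) (simp add: algebra_simps)

lemma cell_product:
  "zmat z \<cdot>\<^sub>m nmat x \<cdot>\<^sub>m amat y \<cdot>\<^sub>m wmat \<cdot>\<^sub>m nmat u \<cdot>\<^sub>m M2 a b c d =
   M2 (- z*x*a + z*(y - x*u)*c) (- z*x*b + z*(y - x*u)*d) (- z*(a + u*c)) (- z*(b + u*d))"
  by (simp add: zmat_def nmat_def amat_def wmat_def algebra_simps)

lemma mdet_cell_product:
  "mdet (zmat z \<cdot>\<^sub>m nmat x \<cdot>\<^sub>m amat y \<cdot>\<^sub>m wmat \<cdot>\<^sub>m nmat u \<cdot>\<^sub>m k) = z^2 * y * mdet (k::'a::comm_ring_1 m2)"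
  by (simp add: mdet_mm zmat_def nmat_def amat_def wmat_def power2_eq_square algebra_simps)

lemma M2_eq_of_mdet_eq:
  assumes "P = M2 A' B' C' D'" "mdet P = mdet (M2 A B C D)" "C' = C" "D' = D"
    and "A' = A \<and> C \<noteq> 0 \<or> B' = B \<and> D \<noteq> 0"
  shows "M2 A B C (D::'a::field) = P"
  using assms by auto

locale discretely_valued_field =
  fixes val :: "'a::field \<Rightarrow> int"
  assumes discrete_valuation: "discrete_valuation val"
begin

lemma val_mult: "x \<noteq> 0 \<Longrightarrow> y \<noteq> 0 \<Longrightarrow> val (x * y) = val x + val y"
  using discrete_valuation unfolding discrete_valuation_def by blast

lemma val_add_ge_min:
  "x \<noteq> 0 \<Longrightarrow> y \<noteq> 0 \<Longrightarrow> x + y \<noteq> 0 \<Longrightarrow> min (val x) (val y) \<le> val (x + y)"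
  using discrete_valuation unfolding discrete_valuation_def by blast

lemma val_one [simp]: "val 1 = 0"
  using val_mult[of 1 1] by simp

lemma val_uminus [simp]: "val (- x) = val x"
proof (cases "x = 0")
  case False
  have "val (-1) = 0"
    using val_mult[of "-1" "-1"] by simp
  with False show ?thesis
    using val_mult[of "-1" x] by simp
qed simp

lemma val_inverse: "x \<noteq> 0 \<Longrightarrow> val (inverse x) = - val x"
  using val_mult[of x "inverse x"] by simp

lemma val_divide: "x \<noteq> 0 \<Longrightarrow> y \<noteq> 0 \<Longrightarrow> val (x / y) = val x - val y"
  by (simp add: divide_inverse val_mult val_inverse)

lemma val_power: "x \<noteq> 0 \<Longrightarrow> val (x ^ m) = int m * val x"
  by (induction m) (auto simp: val_mult algebra_simps)

lemma val_power_int: "x \<noteq> 0 \<Longrightarrow> val (x powi i) = i * val x"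
  by (cases i rule: int_cases4) (auto simp: power_int_minus val_inverse val_power)

lemma val_add_eq_left:
  assumes "x \<noteq> 0" "y = 0 \<or> val x < val y"
  shows "x + y \<noteq> 0 \<and> val (x + y) = val x"
proof (cases "y = 0")
  case False
  with assms have less: "val x < val y" by auto
  have sum_ne: "x + y \<noteq> 0"
  proof
    assume "x + y = 0"
    then have "y = - x" by (simp add: add_eq_0_iff)
    with less show False by simp
  qed
  have "val x \<le> val (x + y)"
    using val_add_ge_min[OF assms(1) False sum_ne] less by simp
  moreover have "min (val (x + y)) (val y) \<le> val x"
    using val_add_ge_min[of "x + y" "- y"] sum_ne False assms(1) by simp
  ultimately show ?thesis
    using less sum_ne by linarith
qed (use assms in simp)

lemma zero_mem_pideal [simp]: "0 \<in> pideal val j"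
  by (simp add: pideal_def)

lemma pideal_add: assumes "x \<in> pideal val j" "y \<in> pideal val j" shows "x + y \<in> pideal val j"
proof (cases "x = 0 \<or> y = 0 \<or> x + y = 0")
  case False
  then show ?thesis
    using assms val_add_ge_min[of x y] by (auto simp: pideal_def)
qed (use assms in \<open>auto simp: pideal_def\<close>)

lemma pideal_uminus: "x \<in> pideal val j \<Longrightarrow> - x \<in> pideal val j"
  by (simp add: pideal_def)

lemma pideal_diff: "x \<in> pideal val j \<Longrightarrow> y \<in> pideal val j \<Longrightarrow> x - y \<in> pideal val j"
  using pideal_add[of x j "- y"] pideal_uminus by simp

lemma pideal_mult: "x \<in> pideal val i \<Longrightarrow> y \<in> pideal val j \<Longrightarrow> x * y \<in> pideal val (i + j)"
  by (cases "x = 0"; cases "y = 0") (auto simp: pideal_def val_mult)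

lemma pideal_mono: "x \<in> pideal val i \<Longrightarrow> j \<le> i \<Longrightarrow> x \<in> pideal val j"
  by (auto simp: pideal_def)

lemma zero_mem_ointegers [simp]: "0 \<in> ointegers val"
  by (simp add: ointegers_def)

lemma one_mem_ounits: "1 \<in> ounits val"
  by (simp add: ounits_def)

lemma ounits_subset_ointegers: "x \<in> ounits val \<Longrightarrow> x \<in> ointegers val"
  by (simp add: ounits_def ointegers_def pideal_def)

lemma ointegers_ounits_iff: "x \<in> ointegers val \<Longrightarrow> x \<in> ounits val \<longleftrightarrow> x \<notin> pideal val 1"
  by (auto simp: ounits_def ointegers_def pideal_def)

lemma ounits_add_pideal: "x \<in> ounits val \<Longrightarrow> y \<in> pideal val 1 \<Longrightarrow> x + y \<in> ounits val"
  using val_add_eq_left[of x y] by (auto simp: ounits_def pideal_def)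

lemma ounits_of_mult:
  "x \<in> ointegers val \<Longrightarrow> y \<in> ointegers val \<Longrightarrow> x * y \<in> ounits val \<Longrightarrow> x \<in> ounits val \<and> y \<in> ounits val"
  by (auto simp: ounits_def ointegers_def pideal_def val_mult)

lemma Kmax_entries:
  assumes "M2 a b c d \<in> Kmax val"
  shows "a \<in> ointegers val" "b \<in> ointegers val" "c \<in> ointegers val" "d \<in> ointegers val"
    "a*d - b*c \<in> ounits val"
  using assms by (auto simp: Kmax_def)

lemma K1_entries:
  assumes "M2 a b c d \<in> K1 val n" "0 < n"
  shows "a \<in> ounits val" "b \<in> ointegers val" "c \<in> pideal val (int n)" "d \<in> ounits val"
proof -
  have k: "M2 a b c d \<in> Kmax val" "a - 1 \<in> pideal val (int n)" "c \<in> pideal val (int n)"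
    using assms(1) by (auto simp: K1_def)
  note entries = Kmax_entries[OF k(1)]
  show "b \<in> ointegers val" "c \<in> pideal val (int n)"
    using entries k by auto
  have "1 + (a - 1) \<in> ounits val"
    using ounits_add_pideal[OF one_mem_ounits pideal_mono[OF k(2)]] assms(2) by simp
  then show "a \<in> ounits val" by simp
  have "b * c \<in> pideal val 1"
    using pideal_mult[OF entries(2)[unfolded ointegers_def] k(3)] pideal_mono assms(2) by force
  then have "a * d \<in> ounits val"
    using ounits_add_pideal[OF entries(5)] by fastforce
  then show "d \<in> ounits val"
    using ounits_of_mult entries by blast
qed

lemma K1_intro:
  "\<lbrakk>a \<in> ounits val; b \<in> ointegers val; c \<in> pideal val (int n); d \<in> ounits val;
    a - 1 \<in> pideal val (int n); a*d - b*c \<in> ounits val\<rbrakk> \<Longrightarrow> M2 a b c d \<in> K1 val n"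
  by (auto simp: K1_def Kmax_def ointegers_def ounits_def pideal_def)

subsection \<open>The invariant l(g) is read off the bottom row\<close>

text \<open>The value of l(g) for g \<in> GL2 with bottom row (C, D), which is never (0, 0).\<close>
definition bottom_row_level :: "nat \<Rightarrow> 'a \<Rightarrow> 'a \<Rightarrow> nat" where
  "bottom_row_level n C D =
     (if C = 0 then n else if D = 0 then 0 else nat (min (int n) (val C - val D)))"

lemma bottom_row_level_le: "bottom_row_level n C D \<le> n"
  by (auto simp: bottom_row_level_def nat_le_iff)

lemma bottom_row_level_scale:
  "z \<noteq> 0 \<Longrightarrow> bottom_row_level n (z * C) (z * D) = bottom_row_level n C D"
  by (simp add: bottom_row_level_def val_mult)

lemma K1_row_level:
  assumes k: "M2 a b c d \<in> K1 val n" and n: "0 < n" and l: "l \<le> n"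
    and u: "u \<noteq> 0" "val u = - int l"
  shows "l = bottom_row_level n (a + u*c) (b + u*d)"
proof -
  note entries = K1_entries[OF k n]
  have uc: "u*c \<in> pideal val (int n - int l)"
    using pideal_mult[OF _ entries(3), of u "- int l"] u by (simp add: pideal_def)
  have ud: "u*d \<noteq> 0" "val (u*d) = - int l"
    using entries(4) u by (auto simp: ounits_def val_mult)
  consider "l = 0" | "0 < l" "l < n" | "l = n"
    using l by linarith
  then show ?thesis
  proof cases
    case 1
    have "a + u*c \<in> ounits val"
      using ounits_add_pideal[OF entries(1)] pideal_mono[OF uc] 1 n by simp
    moreover have "b + u*d \<in> ointegers val"
      using pideal_add[of b 0 "u*d"] entries(2) ud 1 by (simp add: ointegers_def pideal_def)
    ultimately show ?thesis
      using 1 by (auto simp: bottom_row_level_def ounits_def ointegers_def pideal_def)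
  next
    case 2
    have "a + u*c \<in> ounits val"
      using ounits_add_pideal[OF entries(1)] pideal_mono[OF uc] 2 by simp
    moreover have "b + u*d \<noteq> 0 \<and> val (b + u*d) = - int l"
      using val_add_eq_left[OF ud(1), of b] ud(2) entries(2) 2
      by (auto simp: add.commute ointegers_def pideal_def)
    ultimately show ?thesis
      using 2 by (auto simp: bottom_row_level_def ounits_def)
  next
    case 3
    have "a + u*c \<in> pideal val 0"
      using pideal_add[OF ounits_subset_ointegers[OF entries(1), unfolded ointegers_def]]
        pideal_mono[OF uc] 3 by simp
    moreover have "b + u*d \<noteq> 0 \<and> val (b + u*d) = - int l"
      using val_add_eq_left[OF ud(1), of b] ud(2) entries(2) 3 n
      by (auto simp: add.commute ointegers_def pideal_def)
    ultimately show ?thesis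
      using 3 by (auto simp: bottom_row_level_def pideal_def)
  qed
qed

lemma in_cell_level:
  assumes n: "0 < n" and uf: "uf \<noteq> 0" "val uf = 1" and l: "l \<le> n"
    and cell: "in_cell val uf n t l (M2 A B C D)"
  shows "l = bottom_row_level n C D"
proof -
  obtain z x v a b c d where z: "z \<noteq> 0" and v: "v \<in> ounits val" and k: "M2 a b c d \<in> K1 val n"
    and g: "M2 A B C D = zmat z \<cdot>\<^sub>m nmat x \<cdot>\<^sub>m amat (uf powi t) \<cdot>\<^sub>m wmat
                          \<cdot>\<^sub>m nmat (uf powi (- int l) * v) \<cdot>\<^sub>m M2 a b c d"
    using cell unfolding in_cell_def by (metis m2.exhaust)
  define u where "u = uf powi (- int l) * v"
  have "C = - z * (a + u*c)" "D = - z * (b + u*d)"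
    using g by (simp_all add: cell_product u_def)
  then have "bottom_row_level n C D = bottom_row_level n (a + u*c) (b + u*d)"
    using bottom_row_level_scale[of "- z"] z by simp
  moreover have "u \<noteq> 0" "val u = - int l"
    using v uf by (auto simp: u_def ounits_def val_mult val_power_int)
  ultimately show ?thesis
    using K1_row_level[OF k n l] by simp
qed

text \<open>The witnesses z, x, u are chosen to match the bottom row; the unit diagonal entry d of
the K_1 factor then absorbs the determinant.\<close>

lemma in_cell_level_zero:
  assumes uf: "uf \<noteq> 0" "val uf = 1" and C: "C \<noteq> 0" "D = 0 \<or> val C \<le> val D"
    and det: "mdet (M2 A B C D) \<noteq> 0"
  shows "\<exists>t. in_cell val uf n t 0 (M2 A B C D)"
proof -
  define y where "y = uf powi (val (mdet (M2 A B C D)) - 2 * val C)"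
  define d where "d = mdet (M2 A B C D) / (C^2 * y)"
  define b where "b = D/C - d"
  have y: "y \<noteq> 0" "val y = val (mdet (M2 A B C D)) - 2 * val C"
    using uf by (auto simp: y_def val_power_int)
  have d: "d \<in> ounits val"
    using y C det by (simp add: d_def ounits_def val_divide val_mult val_power)
  have "D/C \<in> ointegers val"
    using C by (cases "D = 0") (auto simp: ointegers_def pideal_def val_divide)
  then have "b \<in> ointegers val"
    using pideal_diff ounits_subset_ointegers[OF d] by (simp add: b_def ointegers_def)
  then have k: "M2 1 b 0 d \<in> K1 val n"
    using d by (intro K1_intro) (simp_all add: one_mem_ounits)
  have "M2 A B C D = zmat (- C) \<cdot>\<^sub>m nmat (A/C) \<cdot>\<^sub>m amat y \<cdot>\<^sub>m wmat \<cdot>\<^sub>m nmat (uf powi - int 0 * 1)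
                      \<cdot>\<^sub>m M2 1 b 0 d"
  proof (rule M2_eq_of_mdet_eq[OF cell_product])
    show "mdet (zmat (- C) \<cdot>\<^sub>m nmat (A/C) \<cdot>\<^sub>m amat y \<cdot>\<^sub>m wmat \<cdot>\<^sub>m nmat (uf powi - int 0 * 1)
               \<cdot>\<^sub>m M2 1 b 0 d) = mdet (M2 A B C D)"
      using C y by (simp only: mdet_cell_product) (simp add: d_def power2_eq_square)
  qed (use C in \<open>simp_all add: b_def field_simps\<close>)
  moreover have "- C \<noteq> 0"
    using C by simp
  ultimately show ?thesis
    unfolding in_cell_def y_def using one_mem_ounits k by blast
qed

lemma in_cell_level_n:
  assumes uf: "uf \<noteq> 0" "val uf = 1" and D: "D \<noteq> 0" "C = 0 \<or> val D + int n \<le> val C"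
    and det: "mdet (M2 A B C D) \<noteq> 0"
  shows "\<exists>t. in_cell val uf n t n (M2 A B C D)"
proof -
  define y where "y = uf powi (val (mdet (M2 A B C D)) - 2 * val D - 2 * int n)"
  define d where "d = D^2 * uf^n * uf^n * y / mdet (M2 A B C D)"
  define z where "z = - D * uf^n / d"
  define c where "c = C*d/D - uf^n"
  define x where "x = (y - B/(z*d)) * uf^n"
  have y: "y \<noteq> 0" "val y = val (mdet (M2 A B C D)) - 2 * val D - 2 * int n"
    using uf by (auto simp: y_def val_power_int)
  have d: "d \<in> ounits val"
    using y D det uf by (simp add: d_def ounits_def val_divide val_mult val_power)
  then have "d \<noteq> 0" "val d = 0"
    by (simp_all add: ounits_def)
  have "C*d/D \<in> pideal val (int n)"
    using D \<open>d \<noteq> 0\<close> \<open>val d = 0\<close> by (cases "C = 0") (auto simp: pideal_def val_divide val_mult)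
  moreover have "uf^n \<in> pideal val (int n)"
    using uf by (simp add: pideal_def val_power)
  ultimately have c: "c \<in> pideal val (int n)"
    unfolding c_def by (rule pideal_diff)
  then have k: "M2 1 0 c d \<in> K1 val n"
    using d by (intro K1_intro) (simp_all add: one_mem_ounits ointegers_def)
  have z: "z \<noteq> 0"
    using D \<open>d \<noteq> 0\<close> uf by (simp add: z_def)
  have u: "uf powi (- int n) * 1 = inverse (uf ^ n)"
    using uf by (simp add: power_int_minus)
  have "M2 A B C D = zmat z \<cdot>\<^sub>m nmat x \<cdot>\<^sub>m amat y \<cdot>\<^sub>m wmat \<cdot>\<^sub>m nmat (uf powi - int n * 1)
                      \<cdot>\<^sub>m M2 1 0 c d"
    unfolding u
  proof (rule M2_eq_of_mdet_eq[OF cell_product])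
    show "mdet (zmat z \<cdot>\<^sub>m nmat x \<cdot>\<^sub>m amat y \<cdot>\<^sub>m wmat \<cdot>\<^sub>m nmat (inverse (uf ^ n)) \<cdot>\<^sub>m M2 1 0 c d)
          = mdet (M2 A B C D)"
      using D y \<open>d \<noteq> 0\<close> uf det
      by (simp only: mdet_cell_product) (simp add: d_def z_def field_simps power2_eq_square)
  qed (use D \<open>d \<noteq> 0\<close> uf z in \<open>simp_all add: z_def c_def x_def field_simps\<close>)
  then show ?thesis
    unfolding in_cell_def y_def using z one_mem_ounits k by blast
qed

lemma in_cell_level_between:
  assumes uf: "uf \<noteq> 0" "val uf = 1" and CD: "C \<noteq> 0" "D \<noteq> 0" "val D < val C"
    and det: "mdet (M2 A B C D) \<noteq> 0"
  shows "\<exists>t. in_cell val uf n t (nat (val C - val D)) (M2 A B C D)"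
proof -
  define l where "l = nat (val C - val D)"
  define y where "y = uf powi (val (mdet (M2 A B C D)) - 2 * val C)"
  define d where "d = mdet (M2 A B C D) / (C^2 * y)"
  define u where "u = D / (C * d)"
  have y: "y \<noteq> 0" "val y = val (mdet (M2 A B C D)) - 2 * val C"
    using uf by (auto simp: y_def val_power_int)
  have d: "d \<in> ounits val"
    using y CD det by (simp add: d_def ounits_def val_divide val_mult val_power)
  then have "d \<noteq> 0" "val d = 0"
    by (simp_all add: ounits_def)
  then have "u \<noteq> 0" "val u = - int l"
    using CD by (simp_all add: u_def l_def val_divide val_mult)
  then have v: "u * uf ^ l \<in> ounits val"
    using uf by (simp add: ounits_def val_mult val_power)
  have u: "uf powi (- int l) * (u * uf ^ l) = u"
    using uf by (simp add: power_int_minus)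
  have k: "M2 1 0 0 d \<in> K1 val n"
    using d by (intro K1_intro) (simp_all add: one_mem_ounits)
  have "M2 A B C D = zmat (- C) \<cdot>\<^sub>m nmat (A/C) \<cdot>\<^sub>m amat y \<cdot>\<^sub>m wmat
                      \<cdot>\<^sub>m nmat (uf powi (- int l) * (u * uf ^ l)) \<cdot>\<^sub>m M2 1 0 0 d"
    unfolding u
  proof (rule M2_eq_of_mdet_eq[OF cell_product])
    show "mdet (zmat (- C) \<cdot>\<^sub>m nmat (A/C) \<cdot>\<^sub>m amat y \<cdot>\<^sub>m wmat \<cdot>\<^sub>m nmat u \<cdot>\<^sub>m M2 1 0 0 d)
          = mdet (M2 A B C D)"
      using CD y by (simp only: mdet_cell_product) (simp add: d_def power2_eq_square)
  qed (use CD \<open>d \<noteq> 0\<close> in \<open>simp_all add: u_def field_simps\<close>)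
  moreover have "- C \<noteq> 0"
    using CD by simp
  ultimately show ?thesis
    unfolding in_cell_def y_def l_def[symmetric] using v k by blast
qed

lemma in_cell_bottom_row_level:
  assumes uf: "uf \<noteq> 0" "val uf = 1" and g: "M2 A B C D \<in> GL2"
  shows "\<exists>t. in_cell val uf n t (bottom_row_level n C D) (M2 A B C D)"
proof -
  have det: "mdet (M2 A B C D) \<noteq> 0"
    using g by (simp add: GL2_def)
  consider "C \<noteq> 0" "D = 0 \<or> val C \<le> val D"
    | "D \<noteq> 0" "C = 0 \<or> val D + int n \<le> val C"
    | "C \<noteq> 0" "D \<noteq> 0" "val D < val C" "val C < val D + int n"
    using det by fastforce
  then show ?thesis
  proof cases
    case 1
    then have "bottom_row_level n C D = 0"
      by (auto simp: bottom_row_level_def)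
    with in_cell_level_zero[OF uf 1 det] show ?thesis by simp
  next
    case 2
    then have "bottom_row_level n C D = n"
      by (auto simp: bottom_row_level_def)
    with in_cell_level_n[OF uf 2 det] show ?thesis by simp
  next
    case 3
    then have "bottom_row_level n C D = nat (val C - val D)"
      by (auto simp: bottom_row_level_def)
    with in_cell_level_between[OF uf 3(1-3) det] show ?thesis by simp
  qed
qed

theorem lval_eq_bottom_row_level:
  assumes n: "0 < n" and uf: "uf \<noteq> 0" "val uf = 1" and g: "M2 A B C D \<in> GL2"
  shows "lval val uf n (M2 A B C D) = bottom_row_level n C D"
  unfolding lval_def
proof (rule the_equality)
  show "bottom_row_level n C D \<le> n \<and> (\<exists>t. in_cell val uf n t (bottom_row_level n C D) (M2 A B C D))"
    using bottom_row_level_le in_cell_bottom_row_level[OF uf g] by blast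
qed (use in_cell_level[OF n uf] in blast)

subsection \<open>The cosets N(o) K^0(p) and w K^0(p)\<close>

lemma NoK0p_iff:
  assumes k: "M2 a b c d \<in> Kmax val"
  shows "M2 a b c d \<in> NoK0p val \<longleftrightarrow> d \<in> ounits val"
proof
  assume "M2 a b c d \<in> NoK0p val"
  then obtain x a' b' c' where "M2 a b c d = nmat x \<cdot>\<^sub>m M2 a' b' c' d" "M2 a' b' c' d \<in> K0p val"
    by (auto simp: NoK0p_def K0p_def nmat_def)
  then have k': "M2 a' b' c' d \<in> Kmax val" "b' \<in> pideal val 1"
    by (auto simp: K0p_def)
  note entries = Kmax_entries[OF k'(1)]
  have "b' * c' \<in> pideal val 1"
    using pideal_mult[OF k'(2) entries(3)[unfolded ointegers_def]] by simp
  then have "a' * d \<in> ounits val"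
    using ounits_add_pideal[OF entries(5)] by fastforce
  then show "d \<in> ounits val"
    using ounits_of_mult entries by blast
next
  assume d: "d \<in> ounits val"
  note entries = Kmax_entries[OF k]
  define x where "x = b / d"
  have "d \<noteq> 0" "val d = 0"
    using d by (simp_all add: ounits_def)
  have x: "x \<in> ointegers val"
    using entries(2) \<open>d \<noteq> 0\<close> \<open>val d = 0\<close>
    by (cases "b = 0") (auto simp: x_def ointegers_def pideal_def val_divide)
  have "a - x*c \<in> ointegers val"
    using pideal_diff pideal_mult[of x 0 c 0] x entries(1,3) by (simp add: ointegers_def)
  moreover have "(a - x*c) * d - 0 * c = a*d - b*c"
    using \<open>d \<noteq> 0\<close> by (simp add: x_def field_simps)
  ultimately have "M2 (a - x*c) 0 c d \<in> K0p val"
    using entries by (simp add: K0p_def Kmax_def)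
  moreover have "M2 a b c d = nmat x \<cdot>\<^sub>m M2 (a - x*c) 0 c d"
    using \<open>d \<noteq> 0\<close> by (simp add: nmat_def x_def)
  ultimately show "M2 a b c d \<in> NoK0p val"
    using x unfolding NoK0p_def by blast
qed

lemma wK0p_iff:
  assumes k: "M2 a b c d \<in> Kmax val"
  shows "M2 a b c d \<in> wK0p val \<longleftrightarrow> d \<in> pideal val 1"
proof
  assume "M2 a b c d \<in> wK0p val"
  then obtain a' b' c' d' where "M2 a b c d = wmat \<cdot>\<^sub>m M2 a' b' c' d'" "b' \<in> pideal val 1"
    by (auto simp: wK0p_def K0p_def)
  then show "d \<in> pideal val 1"
    using pideal_uminus by (auto simp: wmat_def)
next
  assume d: "d \<in> pideal val 1"
  note entries = Kmax_entries[OF k]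
  have "M2 (- c) (- d) a b \<in> Kmax val"
    using entries pideal_uminus by (auto simp: Kmax_def ointegers_def mult.commute)
  then have "M2 (- c) (- d) a b \<in> K0p val"
    using pideal_uminus[OF d] by (simp add: K0p_def)
  moreover have "M2 a b c d = wmat \<cdot>\<^sub>m M2 (- c) (- d) a b"
    by (simp add: wmat_def)
  ultimately show "M2 a b c d \<in> wK0p val"
    unfolding wK0p_def by blast
qed

lemma bottom_row_level_Kmax_amat:
  assumes k: "M2 a b c d \<in> Kmax val" and uf: "uf \<noteq> 0" "val uf = 1" and m: "0 < m" "m \<le> n"
  shows "m \<le> bottom_row_level n (c * uf ^ m) d \<longleftrightarrow> d \<in> ounits val"
proof
  assume level: "m \<le> bottom_row_level n (c * uf ^ m) d"
  note entries = Kmax_entries[OF k]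
  show "d \<in> ounits val"
  proof (rule ccontr)
    assume "d \<notin> ounits val"
    then have d: "d \<in> pideal val 1"
      using ointegers_ounits_iff[OF entries(4)] by blast
    then have "- (a * d) \<in> pideal val 1"
      using pideal_uminus pideal_mult[OF entries(1)[unfolded ointegers_def] d] by simp
    then have "- (b * c) \<in> ounits val"
      using ounits_add_pideal[OF entries(5)] by fastforce
    then have "b * c \<in> ounits val"
      by (simp add: ounits_def)
    then have "c \<noteq> 0" "val c = 0"
      using ounits_of_mult[OF entries(2,3)] by (simp_all add: ounits_def)
    then show False
      using level d uf m by (auto simp: bottom_row_level_def pideal_def val_mult val_power split: if_splits)
  qed
next
  assume "d \<in> ounits val"
  moreover have "c \<noteq> 0 \<Longrightarrow> 0 \<le> val c"
    using Kmax_entries(3)[OF k] by (simp add: ointegers_def pideal_def)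
  ultimately show "m \<le> bottom_row_level n (c * uf ^ m) d"
    using uf m by (auto simp: bottom_row_level_def ounits_def val_mult val_power)
qed

end

theorem lemma2p1:
  fixes val :: "'a::field_char_0 \<Rightarrow> int" and uf :: 'a and n :: nat and k :: "'a m2"
  assumes F: "nonarch_local_field val"
    and unif: "uf \<noteq> 0" "val uf = 1"
    and n: "odd n" "0 < n"
    and kK: "k \<in> Kmax val"
  defines "n1 \<equiv> (n + 1) div 2" and "n0 \<equiv> n div 2"
  shows "(n1 \<le> lval val uf n (k \<cdot>\<^sub>m amat (uf ^ n1)) \<longleftrightarrow> k \<in> NoK0p val) \<and>
         (lval val uf n (k \<cdot>\<^sub>m amat (uf ^ n1)) \<le> n0 \<longleftrightarrow> k \<in> wK0p val)"
proof -
  interpret discretely_valued_field val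
    using F by unfold_locales (simp add: nonarch_local_field_def)
  obtain a b c d where k: "k = M2 a b c d" by (cases k)
  note entries = Kmax_entries[OF kK[unfolded k]]
  have n1: "n1 \<le> n" "n0 = n1 - 1" "0 < n1"
    using n unfolding n1_def n0_def by presburger+
  have "k \<cdot>\<^sub>m amat (uf ^ n1) \<in> GL2"
    using entries(5) unif by (simp add: GL2_def mdet_mm k amat_def ounits_def)
  then have "lval val uf n (k \<cdot>\<^sub>m amat (uf ^ n1)) = bottom_row_level n (c * uf ^ n1) d"
    using lval_eq_bottom_row_level[OF n(2) unif] by (simp add: k amat_def)
  moreover have "n1 \<le> bottom_row_level n (c * uf ^ n1) d \<longleftrightarrow> d \<in> ounits val"
    using bottom_row_level_Kmax_amat[OF kK[unfolded k] unif n1(3,1)] .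
  moreover have "d \<in> ounits val \<longleftrightarrow> d \<notin> pideal val 1"
    using ointegers_ounits_iff[OF entries(4)] .
  ultimately show ?thesis
    using NoK0p_iff[OF kK[unfolded k]] wK0p_iff[OF kK[unfolded k]] n1 k by auto
qed

end
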